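(* Let $\pi$ be a positive (smooth) density on $\mathbb{R}^d$ and $\alpha,\beta>0$. Consider $$\text{(HK-KL)}\quad \dot\mu=\alpha\,\mathrm{div}\Big(\nabla\mu-\tfrac{\mu}{\pi}\nabla\pi\Big)-\beta\mu\log\Big(\tfrac{\mu}{\pi}\Big),$$ $$\text{(SHK-KL)}\quad \dot\rho=\alpha\,\mathrm{div}\Big(\nabla\rho-\tfrac{\rho}{\pi}\nabla\pi\Big)-\beta\rho\Big(\log\Big(\tfrac{\rho}{\pi}\Big)-\int_{\mathbb{R}^d}\rho\log\Big(\tfrac{\rho}{\pi}\Big)dx\Big).$$ (i) If $t\mapsto\mu(t)$ solves (HK-KL), then $t\mapsto\rho(t)=\frac{1}{z(t)}\mu(t)$ with $z(t)=\int_{\mathbb{R}^d}\mu(t,x)\,dx>0$ solves (SHK-KL), and $z$ satisfies the mass equation $$\dot z=-\beta z\log z-\beta z\int_{\mathbb{R}^d}\rho\log\Big(\tfrac{\rho}{\pi}\Big)dx.\qquad(\text{Mass-HK})$$ (ii) Conversely, if $t\mapsto\rho(t)$ (probability densities) solves (SHK-KL) and $\kappa$ is a positive solution of (Mass-HK) (with $z$ replaced by $\kappa$ and this $\rho$), then $t\mapsto\mu(t)=\kappa(t)\rho(t)$ solves (HK-KL); here $\kappa$ does not depend on $x$.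
   Context: Solutions are understood as classical solutions with sufficient decay at infinity so that integrals over $\mathbb{R}^d$ of the divergence terms vanish. (HK-KL) and (SHK-KL) are the Hellinger-Kantorovich and spherical Hellinger-Kantorovich gradient-flow equations of the KL divergence $\mathrm{D}_{\mathrm{KL}}(\cdot|\pi)$. *)

theory Defs
  imports "HOL-Analysis.Analysis"
begin

text \<open>Space variable x ranges over an arbitrary Euclidean space 'a (playing the role of R^d,
  d = DIM('a)); time t ranges over an open set T of reals; integrals are Lebesgue integrals
  with respect to Lebesgue measure lborel.\<close>

definition grad :: "('a::euclidean_space \<Rightarrow> real) \<Rightarrow> 'a \<Rightarrow> 'a" where
  "grad f x = (\<Sum>i\<in>Basis. frechet_derivative f (at x) i *\<^sub>R i)"

definition divergence :: "('a::euclidean_space \<Rightarrow> 'a) \<Rightarrow> 'a \<Rightarrow> real" where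
  "divergence F x = (\<Sum>i\<in>Basis. frechet_derivative F (at x) i \<bullet> i)"

definition twice_diff :: "('a::euclidean_space \<Rightarrow> real) \<Rightarrow> bool" where
  "twice_diff f \<longleftrightarrow> (\<forall>x. f differentiable (at x)) \<and> (\<forall>x. grad f differentiable (at x))"

definition flux :: "('a::euclidean_space \<Rightarrow> real) \<Rightarrow> ('a \<Rightarrow> real) \<Rightarrow> 'a \<Rightarrow> 'a" where
  "flux p f x = grad f x - (f x / p x) *\<^sub>R grad p x"

definition relent :: "('a::euclidean_space \<Rightarrow> real) \<Rightarrow> ('a \<Rightarrow> real) \<Rightarrow> real" where
  "relent p f = (\<integral>x. f x * ln (f x / p x) \<partial>lborel)"

definition HK_rhs :: "real \<Rightarrow> real \<Rightarrow> ('a::euclidean_space \<Rightarrow> real) \<Rightarrow> ('a \<Rightarrow> real) \<Rightarrow> 'a \<Rightarrow> real" where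
  "HK_rhs \<alpha> \<beta> p f x = \<alpha> * divergence (flux p f) x - \<beta> * f x * ln (f x / p x)"

definition SHK_rhs :: "real \<Rightarrow> real \<Rightarrow> ('a::euclidean_space \<Rightarrow> real) \<Rightarrow> ('a \<Rightarrow> real) \<Rightarrow> 'a \<Rightarrow> real" where
  "SHK_rhs \<alpha> \<beta> p f x = \<alpha> * divergence (flux p f) x - \<beta> * f x * (ln (f x / p x) - relent p f)"

definition solves_HK :: "real \<Rightarrow> real \<Rightarrow> ('a::euclidean_space \<Rightarrow> real) \<Rightarrow> real set \<Rightarrow> (real \<Rightarrow> 'a \<Rightarrow> real) \<Rightarrow> bool" where
  "solves_HK \<alpha> \<beta> p T \<mu> \<longleftrightarrow> (\<forall>t\<in>T. twice_diff (\<mu> t)) \<and>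
     (\<forall>t\<in>T. \<forall>x. ((\<lambda>s. \<mu> s x) has_real_derivative HK_rhs \<alpha> \<beta> p (\<mu> t) x) (at t))"

definition solves_SHK :: "real \<Rightarrow> real \<Rightarrow> ('a::euclidean_space \<Rightarrow> real) \<Rightarrow> real set \<Rightarrow> (real \<Rightarrow> 'a \<Rightarrow> real) \<Rightarrow> bool" where
  "solves_SHK \<alpha> \<beta> p T \<rho> \<longleftrightarrow> (\<forall>t\<in>T. twice_diff (\<rho> t)) \<and>
     (\<forall>t\<in>T. \<forall>x. ((\<lambda>s. \<rho> s x) has_real_derivative SHK_rhs \<alpha> \<beta> p (\<rho> t) x) (at t))"

definition solves_mass :: "real \<Rightarrow> ('a::euclidean_space \<Rightarrow> real) \<Rightarrow> real set \<Rightarrow> (real \<Rightarrow> 'a \<Rightarrow> real) \<Rightarrow> (real \<Rightarrow> real) \<Rightarrow> bool" where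
  "solves_mass \<beta> p T \<rho> z \<longleftrightarrow>
     (\<forall>t\<in>T. (z has_real_derivative (- \<beta> * z t * ln (z t) - \<beta> * z t * relent p (\<rho> t))) (at t))"

end

theory Submission
  imports Defs
begin

text \<open>
  Both directions rest on one pointwise identity: for a constant \<open>c > 0\<close> the flux is
  1-homogeneous and \<open>ln (c f / \<pi>) = ln c + ln (f / \<pi>)\<close>, so the HK right-hand side of
  \<open>c f\<close> is \<open>c\<close> times the SHK right-hand side of \<open>f\<close> plus \<open>f\<close> times the mass-equation rate
  of \<open>c\<close>. With the product rule this turns a solution \<open>\<rho>\<close> of SHK-KL and a solution \<open>\<kappa>\<close>
  of the mass equation into the solution \<open>\<kappa> \<rho>\<close> of HK-KL. Conversely, for a solution \<open>\<mu>\<close>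
  of HK-KL, differentiating \<open>z = \<integral>\<mu>\<close> under the integral sign and using that the
  divergence term integrates to zero gives \<open>z' = -\<beta> \<integral>\<mu> ln (\<mu> / \<pi>)\<close>; rescaling the entropy
  shows that this is the mass equation for \<open>\<rho> = \<mu> / z\<close>, and the quotient rule together
  with the same identity gives SHK-KL for \<open>\<rho>\<close>.
\<close>

lemma grad_cmult:
  fixes f :: "'a::euclidean_space \<Rightarrow> real"
  assumes "\<forall>x. f differentiable (at x)"
  shows "grad (\<lambda>x. c * f x) = (\<lambda>x. c *\<^sub>R grad f x)"
proof
  fix x
  have "((\<lambda>x. c * f x) has_derivative (\<lambda>h. c * frechet_derivative f (at x) h)) (at x)"
    using assms frechet_derivative_works has_derivative_mult_right by blast
  then have "frechet_derivative (\<lambda>x. c * f x) (at x) = (\<lambda>h. c * frechet_derivative f (at x) h)"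
    by (rule frechet_derivative_at[symmetric])
  then show "grad (\<lambda>x. c * f x) x = c *\<^sub>R grad f x"
    by (simp add: grad_def scaleR_sum_right)
qed

lemma divergence_scaleR:
  fixes F :: "'a::euclidean_space \<Rightarrow> 'a"
  assumes "F differentiable (at x)"
  shows "divergence (\<lambda>x. c *\<^sub>R F x) x = c * divergence F x"
proof -
  have "((\<lambda>x. c *\<^sub>R F x) has_derivative (\<lambda>h. c *\<^sub>R frechet_derivative F (at x) h)) (at x)"
    using assms frechet_derivative_works has_derivative_scaleR_right by blast
  then have "frechet_derivative (\<lambda>x. c *\<^sub>R F x) (at x) = (\<lambda>h. c *\<^sub>R frechet_derivative F (at x) h)"
    by (rule frechet_derivative_at[symmetric])
  then show ?thesis
    by (simp add: divergence_def sum_distrib_left)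
qed

lemma twice_diff_cmult:
  assumes "twice_diff f"
  shows "twice_diff (\<lambda>x. c * f x)"
  using assms by (simp add: twice_diff_def grad_cmult)

lemma flux_cmult:
  assumes "twice_diff f"
  shows "flux p (\<lambda>x. c * f x) = (\<lambda>x. c *\<^sub>R flux p f x)"
  using assms by (simp add: twice_diff_def grad_cmult flux_def fun_eq_iff algebra_simps)

lemma flux_differentiable:
  assumes "twice_diff f" "twice_diff p" "p x \<noteq> 0"
  shows "flux p f differentiable (at x)"
  using assms unfolding twice_diff_def flux_def [abs_def]
  by (intro differentiable_diff differentiable_scaleR differentiable_divide) auto

lemma divergence_flux_cmult:
  assumes "twice_diff f" "twice_diff p" "p x \<noteq> 0"
  shows "divergence (flux p (\<lambda>x. c * f x)) x = c * divergence (flux p f) x"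
  using assms by (simp add: flux_cmult divergence_scaleR flux_differentiable)

lemma HK_rhs_cmult:
  assumes "twice_diff f" "twice_diff p" "p x > 0" "f x > 0" "c > 0"
  shows "HK_rhs \<alpha> \<beta> p (\<lambda>x. c * f x) x
    = (- \<beta> * c * ln c - \<beta> * c * relent p f) * f x + c * SHK_rhs \<alpha> \<beta> p f x"
proof -
  have "ln (c * f x / p x) = ln c + ln (f x / p x)"
    using assms by (simp add: ln_mult_pos flip: times_divide_eq_right)
  then show ?thesis
    using assms by (simp add: HK_rhs_def SHK_rhs_def divergence_flux_cmult algebra_simps)
qed

lemma integral_pos:
  fixes f :: "'a \<Rightarrow> real"
  assumes "integrable M f" "\<And>x. x \<in> space M \<Longrightarrow> f x > 0" "emeasure M (space M) \<noteq> 0"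
  shows "integral\<^sup>L M f > 0"
proof -
  have "integral\<^sup>L M f \<ge> 0"
    using assms by (intro integral_nonneg_AE) (auto intro: less_imp_le)
  moreover have "integral\<^sup>L M f \<noteq> 0"
  proof
    assume "integral\<^sup>L M f = 0"
    then have "AE x in M. f x = 0"
      using assms by (subst (asm) integral_nonneg_eq_0_iff_AE) (auto intro: less_imp_le)
    then have "AE x in M. False"
      using AE_space by eventually_elim (use assms(2) in fastforce)
    then show False
      using assms(3) ae_filter_eq_bot_iff eventually_False by blast
  qed
  ultimately show ?thesis by simp
qed

lemma has_real_derivative_integral_dominated:
  fixes F F' :: "real \<Rightarrow> 'a \<Rightarrow> real"
  assumes "e > 0"
    and F_int: "\<And>s. \<bar>s - t\<bar> < e \<Longrightarrow> integrable M (F s)"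
    and F'_meas: "F' t \<in> borel_measurable M"
    and g_int: "integrable M g"
    and F_deriv: "\<And>s x. \<bar>s - t\<bar> < e \<Longrightarrow> ((\<lambda>r. F r x) has_real_derivative F' s x) (at s)"
    and F'_bound: "\<And>s x. \<bar>s - t\<bar> < e \<Longrightarrow> \<bar>F' s x\<bar> \<le> g x"
  shows "((\<lambda>s. \<integral>x. F s x \<partial>M) has_real_derivative (\<integral>x. F' t x \<partial>M)) (at t)"
proof -
  define q where "q s x = (F s x - F t x) / (s - t)" for s x
  have ball_iff: "s \<in> ball t e \<longleftrightarrow> \<bar>s - t\<bar> < e" for s
    by (simp add: dist_real_def abs_minus_commute)
  have q_bound: "\<bar>q s x\<bar> \<le> g x" if "s \<in> ball t e" for s x
  proof (cases "s = t")
    case False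
    have "\<bar>F s x - F t x\<bar> \<le> g x * \<bar>s - t\<bar>"
      using field_differentiable_bound[of "ball t e" "\<lambda>r. F r x" "\<lambda>r. F' r x" "g x" s t]
        F_deriv F'_bound that \<open>e > 0\<close> ball_iff
      by (auto intro: has_field_derivative_at_within)
    then show ?thesis
      using False by (simp add: q_def abs_divide divide_le_eq)
  qed (use F'_bound[of t x] \<open>e > 0\<close> in \<open>auto simp: q_def\<close>)
  have q_lim: "((\<lambda>s. q s x) \<longlongrightarrow> F' t x) (at t)" for x
    using F_deriv[of t x] \<open>e > 0\<close> by (simp add: q_def has_field_derivative_iff)
  have "((\<lambda>s. \<integral>x. q s x \<partial>M) \<longlongrightarrow> (\<integral>x. F' t x \<partial>M)) (at t within ball t e)"
    unfolding tendsto_at_iff_sequentially comp_def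
  proof (intro allI impI)
    fix X :: "nat \<Rightarrow> real"
    assume X: "\<forall>i. X i \<in> ball t e - {t}" and "X \<longlonglongrightarrow> t"
    show "(\<lambda>i. \<integral>x. q (X i) x \<partial>M) \<longlonglongrightarrow> (\<integral>x. F' t x \<partial>M)"
    proof (rule integral_dominated_convergence)
      show "AE x in M. (\<lambda>i. q (X i) x) \<longlonglongrightarrow> F' t x"
        using q_lim X \<open>X \<longlonglongrightarrow> t\<close> by (auto simp: tendsto_at_iff_sequentially comp_def)
      show "AE x in M. norm (q (X i) x) \<le> g x" for i
        using q_bound X by auto
      show "q (X i) \<in> borel_measurable M" for i
        using F_int X ball_iff \<open>e > 0\<close> by (auto simp: q_def [abs_def])
    qed (use F'_meas g_int in auto)
  qed
  then have lim: "((\<lambda>s. \<integral>x. q s x \<partial>M) \<longlongrightarrow> (\<integral>x. F' t x \<partial>M)) (at t)"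
    using at_within_open[of t "ball t e"] \<open>e > 0\<close> by simp
  have q_integral: "(\<integral>x. q s x \<partial>M) = ((\<integral>x. F s x \<partial>M) - (\<integral>x. F t x \<partial>M)) / (s - t)"
    if "s \<in> ball t e" for s
    using F_int that ball_iff \<open>e > 0\<close> by (simp add: q_def)
  show ?thesis
    unfolding has_field_derivative_iff
    by (rule Lim_transform_within_open[OF lim open_ball]) (use q_integral \<open>e > 0\<close> in auto)
qed

lemma relent_cmult:
  fixes f p :: "'a::euclidean_space \<Rightarrow> real"
  assumes "c > 0" "\<forall>x. f x > 0" "\<forall>x. p x > 0"
    and "integrable lborel f" "integrable lborel (\<lambda>x. f x * ln (f x / p x))"
  shows "relent p (\<lambda>x. c * f x) = c * relent p f + c * ln c * (\<integral>x. f x \<partial>lborel)"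
proof -
  have "c * f x * ln (c * f x / p x) = c * (f x * ln (f x / p x)) + c * ln c * f x" for x
    using assms by (simp add: ln_mult_pos algebra_simps flip: times_divide_eq_right)
  then show ?thesis
    using assms by (simp add: relent_def)
qed

lemma has_bochner_integral_HK_rhs:
  assumes "integrable lborel (divergence (flux p f))"
    and "(\<integral>x. divergence (flux p f) x \<partial>lborel) = 0"
    and "integrable lborel (\<lambda>x. f x * ln (f x / p x))"
  shows "has_bochner_integral lborel (HK_rhs \<alpha> \<beta> p f) (- \<beta> * relent p f)"
proof -
  have "has_bochner_integral lborel (\<lambda>x. \<alpha> * divergence (flux p f) x - \<beta> * (f x * ln (f x / p x)))
      (\<alpha> * 0 - \<beta> * relent p f)"
    using assms unfolding relent_def
    by (intro has_bochner_integral_diff has_bochner_integral_mult_right)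
      (auto simp: has_bochner_integral_iff)
  then show ?thesis
    by (simp add: HK_rhs_def [abs_def] mult.assoc)
qed

lemma HK_mass_has_real_derivative:
  assumes HK: "solves_HK \<alpha> \<beta> \<pi> T \<mu>"
    and \<mu>_int: "\<And>s. s \<in> T \<Longrightarrow> integrable lborel (\<mu> s)"
    and HK_rhs_int: "integrable lborel (HK_rhs \<alpha> \<beta> \<pi> (\<mu> t))"
    and dominated: "\<exists>e>0. \<exists>g. integrable lborel g \<and>
      (\<forall>s. \<bar>s - t\<bar> < e \<longrightarrow> s \<in> T \<and> (\<forall>x. \<bar>HK_rhs \<alpha> \<beta> \<pi> (\<mu> s) x\<bar> \<le> g x))"
  shows "((\<lambda>s. \<integral>x. \<mu> s x \<partial>lborel) has_real_derivative (\<integral>x. HK_rhs \<alpha> \<beta> \<pi> (\<mu> t) x \<partial>lborel)) (at t)"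
proof -
  obtain e g where "e > 0" "integrable lborel g"
    and near: "\<And>s. \<bar>s - t\<bar> < e \<Longrightarrow> s \<in> T \<and> (\<forall>x. \<bar>HK_rhs \<alpha> \<beta> \<pi> (\<mu> s) x\<bar> \<le> g x)"
    using dominated by blast
  then show ?thesis
    using HK \<mu>_int HK_rhs_int
    by (intro has_real_derivative_integral_dominated[where F' = "\<lambda>s. HK_rhs \<alpha> \<beta> \<pi> (\<mu> s)"])
      (auto simp: solves_HK_def)
qed

lemma normalized_HK_solves_SHK_and_mass:
  fixes \<mu> :: "real \<Rightarrow> 'a::euclidean_space \<Rightarrow> real"
  assumes pi_pos: "\<forall>x. \<pi> x > 0" and pi_reg: "twice_diff \<pi>"
    and HK: "solves_HK \<alpha> \<beta> \<pi> T \<mu>"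
    and \<mu>_pos: "\<And>t x. t \<in> T \<Longrightarrow> \<mu> t x > 0"
    and \<mu>_int: "\<And>t. t \<in> T \<Longrightarrow> integrable lborel (\<mu> t)"
    and entropy_int: "\<And>t. t \<in> T \<Longrightarrow> integrable lborel (\<lambda>x. \<mu> t x * ln (\<mu> t x / \<pi> x))"
    and div_int: "\<And>t. t \<in> T \<Longrightarrow> integrable lborel (divergence (flux \<pi> (\<mu> t)))"
    and div_zero: "\<And>t. t \<in> T \<Longrightarrow> (\<integral>x. divergence (flux \<pi> (\<mu> t)) x \<partial>lborel) = 0"
    and dominated: "\<And>t. t \<in> T \<Longrightarrow> \<exists>e>0. \<exists>g. integrable lborel g \<and>
      (\<forall>s. \<bar>s - t\<bar> < e \<longrightarrow> s \<in> T \<and> (\<forall>x. \<bar>HK_rhs \<alpha> \<beta> \<pi> (\<mu> s) x\<bar> \<le> g x))"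
  defines "z \<equiv> \<lambda>t. \<integral>x. \<mu> t x \<partial>lborel"
  shows "\<And>t. t \<in> T \<Longrightarrow> z t > 0" and "solves_SHK \<alpha> \<beta> \<pi> T (\<lambda>t x. \<mu> t x / z t)"
    and "solves_mass \<beta> \<pi> T (\<lambda>t x. \<mu> t x / z t) z"
proof -
  define \<rho> where "\<rho> t x = \<mu> t x / z t" for t x
  have z_pos: "z t > 0" if "t \<in> T" for t
    unfolding z_def using that \<mu>_int \<mu>_pos by (intro integral_pos) auto
  have \<mu>_eq: "\<mu> t = (\<lambda>x. z t * \<rho> t x)" and \<rho>_eq: "\<rho> t = (\<lambda>x. (1 / z t) * \<mu> t x)"
    if "t \<in> T" for t
    using z_pos[OF that] by (auto simp: \<rho>_def)
  have z_deriv: "(z has_real_derivative - \<beta> * relent \<pi> (\<mu> t)) (at t)" if t: "t \<in> T" for t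
  proof -
    have HK_rhs_integral: "has_bochner_integral lborel (HK_rhs \<alpha> \<beta> \<pi> (\<mu> t)) (- \<beta> * relent \<pi> (\<mu> t))"
      using t by (intro has_bochner_integral_HK_rhs div_int div_zero entropy_int)
    then have "(z has_real_derivative (\<integral>x. HK_rhs \<alpha> \<beta> \<pi> (\<mu> t) x \<partial>lborel)) (at t)"
      unfolding z_def using HK \<mu>_int dominated[OF t]
      by (intro HK_mass_has_real_derivative) (auto simp: has_bochner_integral_iff)
    then show ?thesis
      using HK_rhs_integral by (simp add: has_bochner_integral_iff)
  qed
  have relent_\<rho>: "relent \<pi> (\<rho> t) = relent \<pi> (\<mu> t) / z t - ln (z t)" if "t \<in> T" for t
    using relent_cmult[of "1 / z t" "\<mu> t" \<pi>] z_pos[OF that] that pi_pos \<mu>_pos \<mu>_int entropy_int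
    by (simp add: \<rho>_eq[OF that] ln_div z_def)
  have mass_rate: "- \<beta> * z t * ln (z t) - \<beta> * z t * relent \<pi> (\<rho> t) = - \<beta> * relent \<pi> (\<mu> t)"
    if "t \<in> T" for t
    using z_pos[OF that] by (simp add: relent_\<rho>[OF that] field_simps)
  show "\<And>t. t \<in> T \<Longrightarrow> z t > 0"
    by (fact z_pos)
  show "solves_mass \<beta> \<pi> T (\<lambda>t x. \<mu> t x / z t) z"
    using z_deriv mass_rate by (auto simp: solves_mass_def simp flip: \<rho>_def)
  show "solves_SHK \<alpha> \<beta> \<pi> T (\<lambda>t x. \<mu> t x / z t)"
    unfolding solves_SHK_def \<rho>_def [symmetric]
  proof (intro conjI ballI allI)
    fix t x
    assume t: "t \<in> T"
    have "twice_diff (\<mu> t)"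
      using HK t by (simp add: solves_HK_def)
    then show "twice_diff (\<rho> t)"
      unfolding \<rho>_eq[OF t] by (rule twice_diff_cmult)
    have "\<rho> t x > 0"
      using \<mu>_pos[OF t] z_pos[OF t] by (simp add: \<rho>_def)
    have "HK_rhs \<alpha> \<beta> \<pi> (\<mu> t) x = HK_rhs \<alpha> \<beta> \<pi> (\<lambda>x. z t * \<rho> t x) x"
      by (simp only: \<mu>_eq[OF t])
    also have "\<dots> = (- \<beta> * z t * ln (z t) - \<beta> * z t * relent \<pi> (\<rho> t)) * \<rho> t x
        + z t * SHK_rhs \<alpha> \<beta> \<pi> (\<rho> t) x"
      using \<open>twice_diff (\<rho> t)\<close> pi_reg pi_pos \<open>\<rho> t x > 0\<close> z_pos[OF t] by (intro HK_rhs_cmult) auto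
    finally have HK_rhs_eq: "HK_rhs \<alpha> \<beta> \<pi> (\<mu> t) x
        = - \<beta> * relent \<pi> (\<mu> t) * \<rho> t x + z t * SHK_rhs \<alpha> \<beta> \<pi> (\<rho> t) x"
      by (simp only: mass_rate[OF t])
    have \<mu>_deriv: "((\<lambda>s. \<mu> s x) has_real_derivative HK_rhs \<alpha> \<beta> \<pi> (\<mu> t) x) (at t)"
      using HK t by (simp add: solves_HK_def)
    have "((\<lambda>s. \<rho> s x) has_real_derivative
        (HK_rhs \<alpha> \<beta> \<pi> (\<mu> t) x * z t - \<mu> t x * (- \<beta> * relent \<pi> (\<mu> t))) / (z t * z t)) (at t)"
      unfolding \<rho>_def using DERIV_divide[OF \<mu>_deriv z_deriv[OF t]] z_pos[OF t] by simp
    moreover have "\<mu> t x = z t * \<rho> t x"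
      using \<mu>_eq[OF t] by meson
    ultimately show "((\<lambda>s. \<rho> s x) has_real_derivative SHK_rhs \<alpha> \<beta> \<pi> (\<rho> t) x) (at t)"
      using z_pos[OF t] by (simp add: HK_rhs_eq power2_eq_square field_simps)
  qed
qed

lemma mass_times_SHK_solves_HK:
  assumes pi_pos: "\<forall>x. \<pi> x > 0" and pi_reg: "twice_diff \<pi>"
    and SHK: "solves_SHK \<alpha> \<beta> \<pi> T \<rho>"
    and \<rho>_pos: "\<And>t x. t \<in> T \<Longrightarrow> \<rho> t x > 0"
    and \<kappa>_pos: "\<And>t. t \<in> T \<Longrightarrow> \<kappa> t > 0"
    and mass: "solves_mass \<beta> \<pi> T \<rho> \<kappa>"
  shows "solves_HK \<alpha> \<beta> \<pi> T (\<lambda>t x. \<kappa> t * \<rho> t x)"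
  unfolding solves_HK_def
proof (intro conjI ballI allI)
  fix t x
  assume t: "t \<in> T"
  have "twice_diff (\<rho> t)"
    using SHK t by (simp add: solves_SHK_def)
  then show "twice_diff (\<lambda>x. \<kappa> t * \<rho> t x)"
    by (rule twice_diff_cmult)
  have "(\<kappa> has_real_derivative - \<beta> * \<kappa> t * ln (\<kappa> t) - \<beta> * \<kappa> t * relent \<pi> (\<rho> t)) (at t)"
    using mass t by (simp add: solves_mass_def)
  moreover have "((\<lambda>s. \<rho> s x) has_real_derivative SHK_rhs \<alpha> \<beta> \<pi> (\<rho> t) x) (at t)"
    using SHK t by (simp add: solves_SHK_def)
  ultimately have "((\<lambda>s. \<kappa> s * \<rho> s x) has_real_derivative \<kappa> t * SHK_rhs \<alpha> \<beta> \<pi> (\<rho> t) x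
      + (- \<beta> * \<kappa> t * ln (\<kappa> t) - \<beta> * \<kappa> t * relent \<pi> (\<rho> t)) * \<rho> t x) (at t)"
    by (rule DERIV_mult')
  moreover have "HK_rhs \<alpha> \<beta> \<pi> (\<lambda>x. \<kappa> t * \<rho> t x) x = \<kappa> t * SHK_rhs \<alpha> \<beta> \<pi> (\<rho> t) x
      + (- \<beta> * \<kappa> t * ln (\<kappa> t) - \<beta> * \<kappa> t * relent \<pi> (\<rho> t)) * \<rho> t x"
    using HK_rhs_cmult[OF \<open>twice_diff (\<rho> t)\<close> pi_reg] pi_pos \<rho>_pos[OF t] \<kappa>_pos[OF t]
    by (simp add: add.commute)
  ultimately show "((\<lambda>s. \<kappa> s * \<rho> s x) has_real_derivative HK_rhs \<alpha> \<beta> \<pi> (\<lambda>x. \<kappa> t * \<rho> t x) x) (at t)"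
    by simp
qed

theorem mainTheorem14:
  fixes \<pi> :: "'a::euclidean_space \<Rightarrow> real" and \<alpha> \<beta> :: real and T :: "real set"
  assumes pi_pos: "\<forall>x. \<pi> x > 0" and pi_reg: "twice_diff \<pi>"
    and \<alpha>_pos: "\<alpha> > 0" and \<beta>_pos: "\<beta> > 0"
    and T_open: "open T"
  shows
    "(\<forall>\<mu> :: real \<Rightarrow> 'a \<Rightarrow> real.
        solves_HK \<alpha> \<beta> \<pi> T \<mu>
      \<and> (\<forall>t\<in>T. \<forall>x. \<mu> t x > 0)
      \<and> (\<forall>t\<in>T. integrable lborel (\<mu> t)
               \<and> integrable lborel (\<lambda>x. \<mu> t x * ln (\<mu> t x / \<pi> x))
               \<and> integrable lborel (divergence (flux \<pi> (\<mu> t)))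
               \<and> (\<integral>x. divergence (flux \<pi> (\<mu> t)) x \<partial>lborel) = 0)
      \<and> (\<forall>t\<in>T. \<exists>e>0. \<exists>g. integrable lborel g \<and>
               (\<forall>s. \<bar>s - t\<bar> < e \<longrightarrow> s \<in> T \<and> (\<forall>x. \<bar>HK_rhs \<alpha> \<beta> \<pi> (\<mu> s) x\<bar> \<le> g x)))
      \<longrightarrow> (let z = (\<lambda>t. \<integral>x. \<mu> t x \<partial>lborel); \<rho> = (\<lambda>t x. \<mu> t x / z t) in
            (\<forall>t\<in>T. z t > 0) \<and> solves_SHK \<alpha> \<beta> \<pi> T \<rho> \<and> solves_mass \<beta> \<pi> T \<rho> z))
   \<and>
    (\<forall>(\<rho> :: real \<Rightarrow> 'a \<Rightarrow> real) (\<kappa> :: real \<Rightarrow> real).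
        solves_SHK \<alpha> \<beta> \<pi> T \<rho>
      \<and> (\<forall>t\<in>T. (\<forall>x. \<rho> t x > 0) \<and> integrable lborel (\<rho> t) \<and> (\<integral>x. \<rho> t x \<partial>lborel) = 1)
      \<and> (\<forall>t\<in>T. \<kappa> t > 0) \<and> solves_mass \<beta> \<pi> T \<rho> \<kappa>
      \<longrightarrow> solves_HK \<alpha> \<beta> \<pi> T (\<lambda>t x. \<kappa> t * \<rho> t x))"
  unfolding Let_def
  by (intro conjI allI impI; elim conjE)
    (auto intro!: normalized_HK_solves_SHK_and_mass[OF pi_pos pi_reg]
      mass_times_SHK_solves_HK[OF pi_pos pi_reg])

end
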